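(* Let $m,n\in\mathbb{N}$, let $\Gamma:\ell^2(\mathbb{R}^n)\to\ell^1(\mathbb{R}^m)$ be linear and bounded, and let $J(u)=\|\Gamma u\|_{\ell^1(\mathbb{R}^m)}$ for $u\in\ell^2(\mathbb{R}^n)$. Let $u_\alpha\in\ell^2(\mathbb{R}^n)$, let $q_\alpha\in\partial\|\cdot\|_{\ell^1(\mathbb{R}^m)}(\Gamma u_\alpha)$ and $p_\alpha=\Gamma^*q_\alpha$. Then for every $u\in\ell^2(\mathbb{R}^n)$, $$\mathrm{ICB}^{q_\alpha}_{\ell^1(\mathbb{R}^m)}(\Gamma u,\Gamma u_\alpha)\le \mathrm{ICB}^{p_\alpha}_J(u,u_\alpha).$$
   Context: $\ell^p(\mathbb{R}^d)$ is the space of sequences $(x_i)_{i\in\mathbb{N}}$, $x_i\in\mathbb{R}^d$, with $\sum_i|x_i|^p<\infty$ ($|\cdot|$ Euclidean norm), and $\|x\|_{\ell^1(\mathbb{R}^m)}=\sum_i|x_i|$. For a convex functional $F$ with $q\in\partial F(w)$, the Bregman distance is $D_F^q(x,w)=F(x)-F(w)-\langle q,x-w\rangle$, and $\mathrm{ICB}^q_F(x,w)=\inf_{z}\big(D_F^q(x-z,w)+D_F^{-q}(z,-w)\big)$, the infimum being over $z$ in the domain space of $F$ (here $\ell^2(\mathbb{R}^n)$ for $F=J$ and $\ell^1(\mathbb{R}^m)$ for $F=\|\cdot\|_{\ell^1(\mathbb{R}^m)}$). *)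

theory Defs
  imports "HOL-Analysis.Analysis"
begin

definition l2 :: "(nat \<Rightarrow> 'a::real_normed_vector) set" where
  "l2 = {x. summable (\<lambda>i. (norm (x i))\<^sup>2)}"

definition l1 :: "(nat \<Rightarrow> 'a::real_normed_vector) set" where
  "l1 = {x. summable (\<lambda>i. norm (x i))}"

definition linf :: "(nat \<Rightarrow> 'a::real_normed_vector) set" where
  "linf = {x. \<exists>B. \<forall>i. norm (x i) \<le> B}"

definition l1_norm :: "(nat \<Rightarrow> 'a::real_normed_vector) \<Rightarrow> real" where
  "l1_norm x = (\<Sum>i. norm (x i))"

definition l2_norm :: "(nat \<Rightarrow> 'a::real_normed_vector) \<Rightarrow> real" where
  "l2_norm x = sqrt (\<Sum>i. (norm (x i))\<^sup>2)"

definition seq_pair :: "(nat \<Rightarrow> 'a::real_inner) \<Rightarrow> (nat \<Rightarrow> 'a) \<Rightarrow> real" where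
  "seq_pair q x = (\<Sum>i. q i \<bullet> x i)"

definition seq_diff :: "(nat \<Rightarrow> 'a::ab_group_add) \<Rightarrow> (nat \<Rightarrow> 'a) \<Rightarrow> nat \<Rightarrow> 'a" where
  "seq_diff x y = (\<lambda>i. x i - y i)"

definition seq_neg :: "(nat \<Rightarrow> 'a::ab_group_add) \<Rightarrow> nat \<Rightarrow> 'a" where
  "seq_neg x = (\<lambda>i. - x i)"

definition bounded_linear_l2_l1 ::
  "((nat \<Rightarrow> 'a::real_normed_vector) \<Rightarrow> (nat \<Rightarrow> 'b::real_normed_vector)) \<Rightarrow> bool" where
  "bounded_linear_l2_l1 G \<longleftrightarrow>
     (\<forall>u\<in>l2. G u \<in> l1) \<and>
     (\<forall>u\<in>l2. \<forall>v\<in>l2. \<forall>a b::real. G (\<lambda>i. a *\<^sub>R u i + b *\<^sub>R v i) = (\<lambda>i. a *\<^sub>R G u i + b *\<^sub>R G v i)) \<and>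
     (\<exists>C. \<forall>u\<in>l2. l1_norm (G u) \<le> C * l2_norm u)"

definition subdiff_l1_norm :: "(nat \<Rightarrow> 'a::real_inner) \<Rightarrow> (nat \<Rightarrow> 'a) set" where
  "subdiff_l1_norm w = {q \<in> linf. \<forall>z\<in>l1. l1_norm z \<ge> l1_norm w + seq_pair q (seq_diff z w)}"

text \<open>p is the image of q under the adjoint of G: the element of ell-2 (identified with its
  dual) with  <p,u> = <q, G u>  for all u in ell-2.\<close>
definition is_adjoint_image ::
  "((nat \<Rightarrow> 'a::real_inner) \<Rightarrow> (nat \<Rightarrow> 'b::real_inner)) \<Rightarrow> (nat \<Rightarrow> 'b) \<Rightarrow> (nat \<Rightarrow> 'a) \<Rightarrow> bool" where
  "is_adjoint_image G q p \<longleftrightarrow> p \<in> l2 \<and> (\<forall>u\<in>l2. seq_pair p u = seq_pair q (G u))"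

definition bregman :: "((nat \<Rightarrow> 'a::real_inner) \<Rightarrow> real) \<Rightarrow> (nat \<Rightarrow> 'a) \<Rightarrow> (nat \<Rightarrow> 'a) \<Rightarrow> (nat \<Rightarrow> 'a) \<Rightarrow> real" where
  "bregman F q x w = F x - F w - seq_pair q (seq_diff x w)"

definition ICB :: "((nat \<Rightarrow> 'a::real_inner) \<Rightarrow> real) \<Rightarrow> (nat \<Rightarrow> 'a) set \<Rightarrow> (nat \<Rightarrow> 'a) \<Rightarrow> (nat \<Rightarrow> 'a) \<Rightarrow> (nat \<Rightarrow> 'a) \<Rightarrow> real" where
  "ICB F D q x w = (INF z\<in>D. bregman F q (seq_diff x z) w + bregman F (seq_neg q) z (seq_neg w))"

end

theory Submission
  imports Defs
begin

text \<open>
  Every splitting \<open>u = (u - z) + z\<close> with \<open>z \<in> \<ell>\<^sup>2\<close> is mapped by \<open>\<Gamma>\<close> to the splitting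
  \<open>\<Gamma> u = (\<Gamma> u - \<Gamma> z) + \<Gamma> z\<close> in \<open>\<ell>\<^sup>1\<close>, and because \<open>p\<^sub>\<alpha> = \<Gamma>\<^sup>* q\<^sub>\<alpha>\<close> the two Bregman sums agree:
  the linear parts match by the adjoint relation and the values of \<open>J\<close> are values of the
  \<open>\<ell>\<^sup>1\<close> norm. So the right-hand infimum ranges over a subset of the values of the left-hand one,
  which is bounded below by \<open>0\<close> since \<open>q\<^sub>\<alpha>\<close> (and, as the norm is even, \<open>-q\<^sub>\<alpha>\<close> at \<open>-\<Gamma> u\<^sub>\<alpha>\<close>)
  is a subgradient.
\<close>

lemma l2_scaleR_add:
  fixes u v :: "nat \<Rightarrow> 'a::real_normed_vector"
  assumes "u \<in> l2" "v \<in> l2"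
  shows "(\<lambda>i. a *\<^sub>R u i + b *\<^sub>R v i) \<in> l2"
proof -
  have "summable (\<lambda>i. 2 * a\<^sup>2 * (norm (u i))\<^sup>2 + 2 * b\<^sup>2 * (norm (v i))\<^sup>2)"
    using assms by (intro summable_add summable_mult) (auto simp: l2_def)
  moreover have "norm ((norm (a *\<^sub>R u i + b *\<^sub>R v i))\<^sup>2)
      \<le> 2 * a\<^sup>2 * (norm (u i))\<^sup>2 + 2 * b\<^sup>2 * (norm (v i))\<^sup>2" for i
  proof -
    have "(norm (a *\<^sub>R u i + b *\<^sub>R v i))\<^sup>2 \<le> (\<bar>a\<bar> * norm (u i) + \<bar>b\<bar> * norm (v i))\<^sup>2"
      by (intro power_mono) (auto intro: order_trans[OF norm_triangle_ineq])
    also have "\<dots> \<le> 2 * a\<^sup>2 * (norm (u i))\<^sup>2 + 2 * b\<^sup>2 * (norm (v i))\<^sup>2"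
      using sum_squares_bound[of "\<bar>a\<bar> * norm (u i)" "\<bar>b\<bar> * norm (v i)"]
      by (simp add: power2_sum power_mult_distrib)
    finally show ?thesis by simp
  qed
  ultimately show ?thesis
    unfolding l2_def by (auto intro: summable_comparison_test'[where N = 0])
qed

lemma l2_seq_diff: "u \<in> l2 \<Longrightarrow> v \<in> l2 \<Longrightarrow> seq_diff u v \<in> l2"
  using l2_scaleR_add[of u v 1 "-1"] by (simp add: seq_diff_def)

lemma l2_seq_neg: "u \<in> l2 \<Longrightarrow> seq_neg u \<in> l2"
  using l2_scaleR_add[of u u "-1" 0] by (simp add: seq_neg_def)

lemma l1_seq_diff:
  fixes u v :: "nat \<Rightarrow> 'a::real_normed_vector"
  assumes "u \<in> l1" "v \<in> l1"
  shows "seq_diff u v \<in> l1"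
proof -
  have "summable (\<lambda>i. norm (u i) + norm (v i))"
    using assms unfolding l1_def by (intro summable_add) auto
  then have "summable (\<lambda>i. norm (u i - v i))"
    by (rule summable_comparison_test'[where N = 0]) (simp add: norm_triangle_ineq4)
  then show ?thesis by (simp add: l1_def seq_diff_def)
qed

lemma l1_seq_neg: "u \<in> l1 \<Longrightarrow> seq_neg u \<in> l1"
  by (simp add: l1_def seq_neg_def)

lemma l1_norm_seq_neg: "l1_norm (seq_neg u) = l1_norm u"
  by (simp add: l1_norm_def seq_neg_def)

lemma bounded_linear_l2_l1_seq_diff:
  assumes "bounded_linear_l2_l1 G" "u \<in> l2" "v \<in> l2"
  shows "G (seq_diff u v) = seq_diff (G u) (G v)"
proof -
  have "G (\<lambda>i. 1 *\<^sub>R u i + (-1) *\<^sub>R v i) = (\<lambda>i. 1 *\<^sub>R G u i + (-1) *\<^sub>R G v i)"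
    using assms unfolding bounded_linear_l2_l1_def by blast
  then show ?thesis by (simp add: seq_diff_def)
qed

lemma bounded_linear_l2_l1_seq_neg:
  assumes "bounded_linear_l2_l1 G" "u \<in> l2"
  shows "G (seq_neg u) = seq_neg (G u)"
proof -
  have "G (\<lambda>i. (-1) *\<^sub>R u i + 0 *\<^sub>R u i) = (\<lambda>i. (-1) *\<^sub>R G u i + 0 *\<^sub>R G u i)"
    using assms unfolding bounded_linear_l2_l1_def by blast
  then show ?thesis by (simp add: seq_neg_def)
qed

lemma bregman_seq_neg:
  assumes "F (seq_neg z) = F z" "F (seq_neg w) = F w"
  shows "bregman F (seq_neg q) z (seq_neg w) = bregman F q (seq_neg z) w"
proof -
  have "seq_pair (seq_neg q) (seq_diff z (seq_neg w)) = seq_pair q (seq_diff (seq_neg z) w)"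
    unfolding seq_pair_def seq_neg_def seq_diff_def by (simp add: inner_diff_right inner_add_right)
  with assms show ?thesis by (simp add: bregman_def)
qed

lemma bregman_compose_adjoint:
  assumes "bounded_linear_l2_l1 G" "is_adjoint_image G q p" "x \<in> l2" "w \<in> l2"
  shows "bregman (\<lambda>v. F (G v)) p x w = bregman F q (G x) (G w)"
  using assms l2_seq_diff[OF assms(3,4)] bounded_linear_l2_l1_seq_diff[OF assms(1,3,4)]
  by (simp add: bregman_def is_adjoint_image_def)

lemma bregman_l1_norm_nonneg:
  "q \<in> subdiff_l1_norm w \<Longrightarrow> x \<in> l1 \<Longrightarrow> 0 \<le> bregman l1_norm q x w"
  unfolding subdiff_l1_norm_def bregman_def by fastforce

lemma ICB_l1_norm_summand_nonneg:
  assumes "q \<in> subdiff_l1_norm w" "x \<in> l1" "z \<in> l1"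
  shows "0 \<le> bregman l1_norm q (seq_diff x z) w + bregman l1_norm (seq_neg q) z (seq_neg w)"
proof -
  have "0 \<le> bregman l1_norm q (seq_diff x z) w"
    using assms by (simp add: bregman_l1_norm_nonneg l1_seq_diff)
  moreover have "0 \<le> bregman l1_norm q (seq_neg z) w"
    using assms by (simp add: bregman_l1_norm_nonneg l1_seq_neg)
  ultimately show ?thesis
    by (simp add: bregman_seq_neg l1_norm_seq_neg)
qed

lemma ICB_summand_compose_adjoint:
  assumes G: "bounded_linear_l2_l1 G" and adj: "is_adjoint_image G q p"
    and "u \<in> l2" "w \<in> l2" "z \<in> l2"
  shows "bregman (\<lambda>v. l1_norm (G v)) p (seq_diff u z) w
           + bregman (\<lambda>v. l1_norm (G v)) (seq_neg p) z (seq_neg w)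
         = bregman l1_norm q (seq_diff (G u) (G z)) (G w)
           + bregman l1_norm (seq_neg q) (G z) (seq_neg (G w))"
proof -
  have "bregman (\<lambda>v. l1_norm (G v)) (seq_neg p) z (seq_neg w)
      = bregman (\<lambda>v. l1_norm (G v)) p (seq_neg z) w"
    using assms by (intro bregman_seq_neg) (simp_all add: bounded_linear_l2_l1_seq_neg l1_norm_seq_neg)
  also have "\<dots> = bregman l1_norm q (seq_neg (G z)) (G w)"
    using assms by (simp add: bregman_compose_adjoint l2_seq_neg bounded_linear_l2_l1_seq_neg)
  also have "\<dots> = bregman l1_norm (seq_neg q) (G z) (seq_neg (G w))"
    by (simp add: bregman_seq_neg l1_norm_seq_neg)
  finally show ?thesis
    using assms by (simp add: bregman_compose_adjoint l2_seq_diff bounded_linear_l2_l1_seq_diff)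
qed

theorem theorem5:
  fixes G :: "(nat \<Rightarrow> real^'n) \<Rightarrow> (nat \<Rightarrow> real^'m)"
    and u_alpha u :: "nat \<Rightarrow> real^'n"
    and q_alpha :: "nat \<Rightarrow> real^'m"
    and p_alpha :: "nat \<Rightarrow> real^'n"
  assumes "bounded_linear_l2_l1 G"
    and "u_alpha \<in> l2"
    and "q_alpha \<in> subdiff_l1_norm (G u_alpha)"
    and "is_adjoint_image G q_alpha p_alpha"
    and "u \<in> l2"
  shows "ICB l1_norm l1 q_alpha (G u) (G u_alpha)
           \<le> ICB (\<lambda>v. l1_norm (G v)) l2 p_alpha u u_alpha"
proof -
  define \<Phi> where "\<Phi> y = bregman l1_norm q_alpha (seq_diff (G u) y) (G u_alpha)
      + bregman l1_norm (seq_neg q_alpha) y (seq_neg (G u_alpha))" for y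
  have G_l1: "G ` l2 \<subseteq> l1"
    using assms(1) by (auto simp: bounded_linear_l2_l1_def)
  have "G u \<in> l1"
    using assms(5) G_l1 by blast
  then have "bdd_below (\<Phi> ` l1)"
    using assms(3) ICB_l1_norm_summand_nonneg unfolding \<Phi>_def by (intro bdd_belowI2[where m = 0]) blast
  then have "(INF y\<in>l1. \<Phi> y) \<le> (INF y\<in>G ` l2. \<Phi> y)"
    using assms(2) G_l1 by (intro cINF_superset_mono) auto
  also have "\<dots> = (INF z\<in>l2. bregman (\<lambda>v. l1_norm (G v)) p_alpha (seq_diff u z) u_alpha
      + bregman (\<lambda>v. l1_norm (G v)) (seq_neg p_alpha) z (seq_neg u_alpha))"
    unfolding image_image \<Phi>_def using assms(1,2,4,5)
    by (intro INF_cong) (simp_all add: ICB_summand_compose_adjoint)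
  finally show ?thesis
    by (simp add: ICB_def \<Phi>_def)
qed

end
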